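(* Let $\nu\in\mathbb{S}^{2n}$, $d\in\mathbb{R}$, $\Pi^+_{\nu,d}=\{\xi\in\mathbb{R}^{2n+1}:\langle\xi,\nu\rangle>d\}$, $p\ge2$ (in fact any $p>1$) and $1\le i\le n$. Then for every real-valued $u\in C_0^\infty(\Pi^+_{\nu,d})$, \[ \Bigl(\frac{p-1}{p}\Bigr)^p\int_{\Pi^+_{\nu,d}}\frac{|\langle X_i(\xi),\nu\rangle|^p}{\operatorname{dist}(\xi,\partial\Pi^+_{\nu,d})^p}|u|^p\,d\xi\le\int_{\Pi^+_{\nu,d}}|X_iu|^p\,d\xi, \] and the same inequality holds with $X_i$ replaced by $Y_i$ on both sides.
   Context: Points of $\mathbb{R}^{2n+1}$ are written $\xi=(x,y,t)$, $x,y\in\mathbb{R}^n$, $t\in\mathbb{R}$. For $1\le i\le n$, $X_i=\partial_{x_i}+2y_i\partial_t$ and $Y_i=\partial_{y_i}-2x_i\partial_t$ (the left-invariant horizontal vector fields of the Heisenberg group $\mathbb{H}^n$), identified with their coefficient vectors in $\mathbb{R}^{2n+1}$; $\langle\cdot,\cdot\rangle$ is the Euclidean inner product, $\mathbb{S}^{2n}$ the Euclidean unit sphere, $\operatorname{dist}$ the Euclidean distance. *)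

theory Defs
  imports "HOL-Analysis.Analysis"
begin

text \<open>Points of R^(2n+1) are triples (x, y, t) with x, y :: real^'n and t :: real,
  where n = CARD('n). The product type carries the Euclidean inner product/norm/Lebesgue measure.\<close>

type_synonym 'n heis = "(real ^ 'n) \<times> (real ^ 'n) \<times> real"

text \<open>Coefficient vectors of X_i = d/dx_i + 2 y_i d/dt and Y_i = d/dy_i - 2 x_i d/dt.\<close>
definition Xvf :: "'n::finite \<Rightarrow> 'n heis \<Rightarrow> 'n heis" where
  "Xvf i \<xi> = (axis i 1, 0, 2 * (fst (snd \<xi>)) $ i)"

definition Yvf :: "'n::finite \<Rightarrow> 'n heis \<Rightarrow> 'n heis" where
  "Yvf i \<xi> = (0, axis i 1, - 2 * (fst \<xi>) $ i)"

definition vf_apply :: "('a::real_normed_vector \<Rightarrow> 'a) \<Rightarrow> ('a \<Rightarrow> real) \<Rightarrow> 'a \<Rightarrow> real" where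
  "vf_apply V u \<xi> = frechet_derivative u (at \<xi>) (V \<xi>)"

fun Ck :: "nat \<Rightarrow> ('a::real_normed_vector \<Rightarrow> real) \<Rightarrow> bool" where
  "Ck 0 f = continuous_on UNIV f"
| "Ck (Suc k) f = (f differentiable_on UNIV \<and> (\<forall>v. Ck k (\<lambda>x. frechet_derivative f (at x) v)))"

definition smooth :: "('a::real_normed_vector \<Rightarrow> real) \<Rightarrow> bool" where
  "smooth f = (\<forall>k. Ck k f)"

definition C0_inf :: "'a::real_normed_vector set \<Rightarrow> ('a \<Rightarrow> real) set" where
  "C0_inf U = {u. smooth u \<and> compact (closure {x. u x \<noteq> 0}) \<and> closure {x. u x \<noteq> 0} \<subseteq> U}"

definition halfspace :: "'a::real_inner \<Rightarrow> real \<Rightarrow> 'a set" where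
  "halfspace \<nu> d = {\<xi>. inner \<xi> \<nu> > d}"

end

theory Submission
  imports Defs
begin

text \<open>Along an integral line \<open>s \<mapsto> \<xi> + s X\<^sub>i(\<xi>)\<close> of \<open>X\<^sub>i\<close> (or \<open>Y\<^sub>i\<close>) the field is constant, so
  \<open>X\<^sub>i u\<close> is the derivative of \<open>u\<close> along the line, \<open>\<langle>X\<^sub>i(\<xi>), \<nu>\<rangle>\<close> is constant, and the distance
  to the boundary of the half-space is an affine function of \<open>s\<close>. The inequality therefore
  reduces to the one-dimensional Hardy inequality with an affine weight \<open>g\<close>, which follows by
  integrating the derivative of \<open>\<bar>f\<bar> powr p * g powr (1 - p)\<close> and estimating pointwise with Young's inequality.
  Integrating over all lines is Fubini's theorem: for fixed \<open>y\<close> (resp. \<open>x\<close>) the lines of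
  \<open>X\<^sub>i\<close> (resp. \<open>Y\<^sub>i\<close>) are parallel lines in the remaining coordinates.\<close>

lemma has_real_derivative_abs_powr:
  fixes p z :: real
  assumes p: "p > 1"
  shows "((\<lambda>z. \<bar>z\<bar> powr p) has_real_derivative p * \<bar>z\<bar> powr (p - 1) * sgn z) (at z)"
proof (cases "z = 0")
  case True
  have "((\<lambda>h::real. \<bar>h\<bar> powr (p - 1)) \<longlongrightarrow> \<bar>0\<bar> powr (p - 1)) (at 0)"
    using p by (intro tendsto_intros) auto
  then have "((\<lambda>h::real. \<bar>h\<bar> powr (p - 1)) \<longlongrightarrow> 0) (at 0)"
    by simp
  moreover have "\<forall>\<^sub>F h in at 0. \<bar>h\<bar> powr (p - 1) = \<bar>(\<bar>h\<bar> powr p - \<bar>0\<bar> powr p) / h\<bar>"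
    by (auto simp: eventually_at_filter powr_diff)
  ultimately have "((\<lambda>h. \<bar>(\<bar>h\<bar> powr p - \<bar>0\<bar> powr p) / h\<bar>) \<longlongrightarrow> 0) (at 0)"
    by (rule Lim_transform_eventually)
  then have "((\<lambda>h. (\<bar>h\<bar> powr p - \<bar>0\<bar> powr p) / h) \<longlongrightarrow> 0) (at 0)"
    by (rule tendsto_rabs_zero_cancel)
  then show ?thesis
    using True by (simp add: has_field_derivative_iff)
next
  case False
  have deriv: "((\<lambda>x. (sgn z * x) powr p) has_real_derivative
          p * (sgn z * z) powr (p - 1) * sgn z) (at z)"
    using False by (auto intro!: derivative_eq_intros simp: sgn_real_def)
  have "((\<lambda>x. x * z) \<longlongrightarrow> z * z) (nhds z)"
    by (intro tendsto_mult filterlim_ident tendsto_const)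
  then have "\<forall>\<^sub>F x in nhds z. 0 < x * z"
    by (rule order_tendstoD) (use False in \<open>auto simp: zero_less_mult_iff linorder_neq_iff\<close>)
  then have "\<forall>\<^sub>F x in nhds z. \<bar>x\<bar> powr p = (sgn z * x) powr p"
    by eventually_elim (auto simp: zero_less_mult_iff)
  moreover have "sgn z * z = \<bar>z\<bar>"
    by (simp add: abs_sgn mult.commute)
  ultimately show ?thesis
    using deriv by (subst DERIV_cong_ev) auto
qed

lemma young_weighted:
  fixes a y p t :: real
  assumes a: "a \<ge> 0" and y: "y \<ge> 0" and p: "p > 1" and t: "t > 0"
  shows "p * (a powr (p - 1) * y) \<le> (p - 1) * t * a powr p + t powr (1 - p) * y powr p"
proof (cases "a = 0 \<or> y = 0")
  case True
  then show ?thesis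
    using p t by (auto intro!: add_nonneg_nonneg mult_nonneg_nonneg)
next
  case False
  then have a0: "a > 0" and y0: "y > 0"
    using a y by auto
  define A where "A = t * a powr p"
  define B where "B = t powr (1 - p) * y powr p"
  have young: "A powr ((p - 1) / p) * B powr (1 / p) \<le> (p - 1) / p * A + 1 / p * B"
    using Youngs_inequality_0[of "(p - 1) / p" "1 / p" A B] a0 y0 p t
    by (simp add: A_def B_def diff_divide_distrib)
  have A_powr: "A powr ((p - 1) / p) = t powr ((p - 1) / p) * a powr (p - 1)"
    unfolding A_def using t a0 p by (simp add: powr_mult powr_powr)
  have B_powr: "B powr (1 / p) = t powr ((1 - p) / p) * y"
    unfolding B_def using t y0 p by (simp add: powr_mult powr_powr)
  have "t powr ((p - 1) / p) * t powr ((1 - p) / p) = 1"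
    using t by (simp add: powr_add[symmetric] diff_divide_distrib)
  then have "A powr ((p - 1) / p) * B powr (1 / p) = a powr (p - 1) * y"
    unfolding A_powr B_powr by (metis mult.assoc mult.commute mult.left_neutral)
  with young have "a powr (p - 1) * y \<le> (p - 1) / p * A + 1 / p * B"
    by simp
  then have "p * (a powr (p - 1) * y) \<le> p * ((p - 1) / p * A + 1 / p * B)"
    using p by (simp add: mult_left_mono)
  also have "\<dots> = (p - 1) * A + B"
    using p by (simp add: field_simps)
  finally show ?thesis
    by (simp add: A_def B_def mult.assoc)
qed

text \<open>The one-dimensional Hardy inequality is obtained by integrating this bound over an
  interval: the subtracted term is \<open>k\<close> times the derivative of
  \<open>\<bar>f\<bar> powr p * g powr (1 - p)\<close> along a function \<open>f\<close> (value \<open>x\<close>, derivative \<open>y\<close>)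
  and an affine weight \<open>g\<close> of slope \<open>c\<close>, so it integrates to zero.\<close>

lemma hardy_pointwise_bound:
  fixes p c g x y :: real
  assumes p: "p > 1" and g: "g > 0"
  defines "t \<equiv> (p - 1) / p" and "k \<equiv> sgn c * \<bar>c\<bar> powr (p - 1)"
  shows "t * (\<bar>c\<bar> powr p / g powr p * \<bar>x\<bar> powr p)
    \<le> t powr (1 - p) * \<bar>y\<bar> powr p
       - k * (p * \<bar>x\<bar> powr (p - 1) * sgn x * y * g powr (1 - p)
              - (p - 1) * c * g powr (- p) * \<bar>x\<bar> powr p)"
proof -
  define \<alpha> where "\<alpha> = \<bar>c\<bar> * \<bar>x\<bar> / g"
  have \<alpha>: "\<alpha> \<ge> 0"
    using g by (simp add: \<alpha>_def)
  have kc: "k * c = \<bar>c\<bar> powr p"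
  proof (cases "c = 0")
    case False
    then have "\<bar>c\<bar> powr (p - 1) * \<bar>c\<bar> = \<bar>c\<bar> powr p"
      by (simp add: powr_diff)
    moreover have "sgn c * c = \<bar>c\<bar>"
      by (simp add: abs_sgn mult.commute)
    ultimately show ?thesis
      by (metis k_def mult.assoc mult.commute)
  qed (simp add: k_def)
  have \<alpha>_powr: "\<alpha> powr p = \<bar>c\<bar> powr p / g powr p * \<bar>x\<bar> powr p"
    using g by (simp add: \<alpha>_def powr_mult powr_divide)
  have "k * (p * \<bar>x\<bar> powr (p - 1) * sgn x * y * g powr (1 - p))
      \<le> \<bar>c\<bar> powr (p - 1) * (p * \<bar>x\<bar> powr (p - 1) * \<bar>y\<bar> * g powr (1 - p))"
  proof -
    have "\<bar>k\<bar> \<le> \<bar>c\<bar> powr (p - 1)"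
      by (cases "c = 0") (auto simp: k_def abs_mult)
    moreover have "\<bar>p * \<bar>x\<bar> powr (p - 1) * sgn x * y * g powr (1 - p)\<bar>
        \<le> p * \<bar>x\<bar> powr (p - 1) * \<bar>y\<bar> * g powr (1 - p)"
      using p g by (cases "x = 0") (auto simp: abs_mult)
    ultimately have "\<bar>k\<bar> * \<bar>p * \<bar>x\<bar> powr (p - 1) * sgn x * y * g powr (1 - p)\<bar>
        \<le> \<bar>c\<bar> powr (p - 1) * (p * \<bar>x\<bar> powr (p - 1) * \<bar>y\<bar> * g powr (1 - p))"
      by (intro mult_mono) auto
    then show ?thesis
      using abs_ge_self[of "k * (p * \<bar>x\<bar> powr (p - 1) * sgn x * y * g powr (1 - p))"]
      unfolding abs_mult by linarith
  qed
  also have "\<dots> = p * (\<alpha> powr (p - 1) * \<bar>y\<bar>)"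
    using g powr_add[of g "1 - p" "p - 1", symmetric]
    by (simp add: \<alpha>_def powr_mult powr_divide powr_minus_divide[symmetric] field_simps)
  also have "\<dots> \<le> (p - 1) * t * \<alpha> powr p + t powr (1 - p) * \<bar>y\<bar> powr p"
    using p by (intro young_weighted \<alpha>) (auto simp: t_def)
  finally have "k * (p * \<bar>x\<bar> powr (p - 1) * sgn x * y * g powr (1 - p))
      \<le> (p - 1) * t * \<alpha> powr p + t powr (1 - p) * \<bar>y\<bar> powr p" .
  moreover have "k * ((p - 1) * c * g powr (- p) * \<bar>x\<bar> powr p) = (p - 1) * \<alpha> powr p"
  proof -
    have "k * ((p - 1) * c * g powr (- p) * \<bar>x\<bar> powr p)
        = (p - 1) * (k * c * g powr (- p) * \<bar>x\<bar> powr p)"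
      by (simp add: mult_ac)
    then show ?thesis
      by (simp add: \<alpha>_powr kc powr_minus_divide)
  qed
  moreover have "(p - 1) * \<alpha> powr p - (p - 1) * t * \<alpha> powr p = t * \<alpha> powr p"
  proof -
    have "(p - 1) * (1 - t) = t"
      using p by (simp add: t_def field_simps)
    then show ?thesis
      by (metis left_diff_distrib mult.right_neutral right_diff_distrib)
  qed
  ultimately show ?thesis
    unfolding \<alpha>_powr[symmetric] right_diff_distrib by linarith
qed

lemma continuous_on_hardy_integrand:
  fixes f :: "real \<Rightarrow> real" and p c e :: real
  assumes "p > 0" and "continuous_on S f" and "\<And>s. s \<in> S \<Longrightarrow> 0 < e + c * s"
  shows "continuous_on S (\<lambda>s. \<bar>c\<bar> powr p / (e + c * s) powr p * \<bar>f s\<bar> powr p)"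
proof -
  have "continuous_on S (\<lambda>s. \<bar>f s\<bar> powr p)"
    using assms by (intro continuous_on_powr' continuous_intros) auto
  moreover have "continuous_on S (\<lambda>s. (e + c * s) powr p)"
    using assms by (intro continuous_on_powr continuous_intros) (auto dest: assms(3))
  ultimately show ?thesis
    using assms by (intro continuous_on_mult continuous_on_divide continuous_on_const) force+
qed

lemma has_integral_hardy_potential_derivative:
  fixes f f' :: "real \<Rightarrow> real" and p c e a b :: real
  assumes p: "p > 1" and ab: "a \<le> b"
    and pos: "\<And>s. s \<in> {a..b} \<Longrightarrow> 0 < e + c * s"
    and fa: "f a = 0" and fb: "f b = 0"
    and f': "\<And>s. s \<in> {a..b} \<Longrightarrow> (f has_real_derivative f' s) (at s)"
  shows "((\<lambda>s. p * \<bar>f s\<bar> powr (p - 1) * sgn (f s) * f' s * (e + c * s) powr (1 - p)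
      - (p - 1) * c * (e + c * s) powr (- p) * \<bar>f s\<bar> powr p) has_integral 0) {a..b}"
proof -
  define F where "F s = \<bar>f s\<bar> powr p * (e + c * s) powr (1 - p)" for s
  have "(F has_real_derivative p * \<bar>f s\<bar> powr (p - 1) * sgn (f s) * f' s * (e + c * s) powr (1 - p)
      - (p - 1) * c * (e + c * s) powr (- p) * \<bar>f s\<bar> powr p) (at s)" if s: "s \<in> {a..b}" for s
  proof -
    have "((\<lambda>s. e + c * s) has_real_derivative c) (at s)"
      by (auto intro!: derivative_eq_intros)
    from DERIV_mult[OF DERIV_chain2[OF has_real_derivative_abs_powr[OF p] f'[OF s]]
                       DERIV_fun_powr[OF this pos[OF s], of "1 - p"]]
    show ?thesis
      by (simp add: F_def[abs_def] algebra_simps)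
  qed
  then have "((\<lambda>s. p * \<bar>f s\<bar> powr (p - 1) * sgn (f s) * f' s * (e + c * s) powr (1 - p)
      - (p - 1) * c * (e + c * s) powr (- p) * \<bar>f s\<bar> powr p) has_integral F b - F a) {a..b}"
    using ab by (intro fundamental_theorem_of_calculus)
      (auto simp: has_real_derivative_iff_has_vector_derivative[symmetric]
            intro: has_field_derivative_at_within)
  then show ?thesis
    using fa fb p by (simp add: F_def)
qed

lemma hardy_interval:
  fixes f f' :: "real \<Rightarrow> real" and p c e a b :: real
  assumes p: "p > 1" and ab: "a \<le> b"
    and pos: "\<And>s. s \<in> {a..b} \<Longrightarrow> 0 < e + c * s"
    and fa: "f a = 0" and fb: "f b = 0"
    and f': "\<And>s. s \<in> {a..b} \<Longrightarrow> (f has_real_derivative f' s) (at s)"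
    and f'_cont: "continuous_on {a..b} f'"
  shows "((p - 1) / p) powr p * integral {a..b} (\<lambda>s. \<bar>c\<bar> powr p / (e + c * s) powr p * \<bar>f s\<bar> powr p)
    \<le> integral {a..b} (\<lambda>s. \<bar>f' s\<bar> powr p)"
proof -
  define t where "t = (p - 1) / p"
  define k where "k = sgn c * \<bar>c\<bar> powr (p - 1)"
  define A where "A s = \<bar>c\<bar> powr p / (e + c * s) powr p * \<bar>f s\<bar> powr p" for s
  define B where "B s = \<bar>f' s\<bar> powr p" for s
  define F' where "F' s = p * \<bar>f s\<bar> powr (p - 1) * sgn (f s) * f' s * (e + c * s) powr (1 - p)
    - (p - 1) * c * (e + c * s) powr (- p) * \<bar>f s\<bar> powr p" for s
  have t: "t > 0"
    using p by (simp add: t_def)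
  have F'_integral: "(F' has_integral 0) {a..b}"
    unfolding F'_def[abs_def] by (rule has_integral_hardy_potential_derivative[OF p ab pos fa fb f'])
  have f_cont: "continuous_on {a..b} f"
    using f' by (meson DERIV_isCont continuous_at_imp_continuous_on)
  have "continuous_on {a..b} A"
    unfolding A_def using p pos f_cont by (intro continuous_on_hardy_integrand) auto
  then have A_int: "A integrable_on {a..b}"
    by (rule integrable_continuous_interval)
  have "continuous_on {a..b} B"
    unfolding B_def using p by (intro continuous_on_powr' continuous_intros f'_cont) auto
  then have B_int: "B integrable_on {a..b}"
    by (rule integrable_continuous_interval)
  have "t * A s \<le> t powr (1 - p) * B s - k * F' s" if "s \<in> {a..b}" for s
    unfolding A_def B_def F'_def t_def k_def by (rule hardy_pointwise_bound[OF p pos[OF that]])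
  then have "integral {a..b} (\<lambda>s. t * A s) \<le> integral {a..b} (\<lambda>s. t powr (1 - p) * B s - k * F' s)"
    using A_int B_int F'_integral
    by (intro integral_le integrable_diff integrable_on_mult_right) (auto simp: has_integral_integrable)
  also have "\<dots> = integral {a..b} (\<lambda>s. t powr (1 - p) * B s) - integral {a..b} (\<lambda>s. k * F' s)"
    using B_int F'_integral
    by (intro integral_diff integrable_on_mult_right) (auto simp: has_integral_integrable)
  also have "\<dots> = t powr (1 - p) * integral {a..b} B"
    using integral_unique[OF F'_integral] by simp
  finally have "t powr (p - 1) * (t * integral {a..b} A)
      \<le> t powr (p - 1) * (t powr (1 - p) * integral {a..b} B)"
    using t by (intro mult_left_mono) auto
  moreover have "t powr (p - 1) * (t powr (1 - p) * integral {a..b} B) = integral {a..b} B"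
    using t by (simp add: powr_add[symmetric])
  moreover have "t powr (p - 1) * (t * integral {a..b} A) = t powr p * integral {a..b} A"
    using t by (simp add: powr_diff)
  ultimately have "t powr p * integral {a..b} A \<le> integral {a..b} B"
    by simp
  then show ?thesis
    unfolding t_def A_def B_def .
qed

lemma interval_around_compact_support:
  fixes f :: "real \<Rightarrow> real" and T :: "real set"
  assumes T: "compact T" "T \<noteq> {}" and f: "continuous_on UNIV f" and supp: "{s. f s \<noteq> 0} \<subseteq> T"
    and pos: "\<And>s. s \<in> T \<Longrightarrow> 0 < e + c * s"
  obtains a b where "a \<le> b" and "\<And>s. s \<in> {a..b} \<Longrightarrow> 0 < e + c * s"
    and "\<And>s. s \<notin> {a<..<b} \<Longrightarrow> f s = 0"
proof -
  obtain a b where "a \<in> T" "b \<in> T" and T_ab: "T \<subseteq> {a..b}"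
    using compact_attains_inf[OF T] compact_attains_sup[OF T] by fastforce
  then have ab: "a \<le> b" and ab_pos: "0 < e + c * a" "0 < e + c * b"
    using pos by auto
  have "0 < e + c * s" if "s \<in> {a..b}" for s
  proof -
    have "c * a \<le> c * s \<or> c * b \<le> c * s"
      using that by (cases "c \<ge> 0") (auto intro: mult_left_mono mult_left_mono_neg)
    then show ?thesis
      using ab_pos by linarith
  qed
  moreover have "f s = 0" if "s \<notin> {a<..<b}" for s
  proof -
    have "closed {s. f s = 0}"
      using f by (intro closed_Collect_eq continuous_on_const)
    moreover have "{..<a} \<subseteq> {s. f s = 0}" "{b<..} \<subseteq> {s. f s = 0}"
      using supp T_ab by auto
    ultimately have "closure {..<a} \<subseteq> {s. f s = 0}" "closure {b<..} \<subseteq> {s. f s = 0}"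
      by (simp_all only: closure_minimal)
    then show ?thesis
      using that by (auto simp: subset_eq not_less)
  qed
  ultimately show ?thesis
    using ab that by blast
qed

lemma hardy_real_line:
  fixes f f' :: "real \<Rightarrow> real" and p c e :: real and T :: "real set"
  assumes p: "p > 1" and T: "compact T"
    and supp: "{s. f s \<noteq> 0} \<subseteq> T"
    and pos: "\<And>s. s \<in> T \<Longrightarrow> 0 < e + c * s"
    and f': "\<And>s. (f has_real_derivative f' s) (at s)"
    and f'_cont: "continuous_on UNIV f'"
  shows "ennreal (((p - 1) / p) powr p) * (\<integral>\<^sup>+s. ennreal (indicator {s. 0 < e + c * s} s *
            (\<bar>c\<bar> powr p / (e + c * s) powr p * \<bar>f s\<bar> powr p)) \<partial>lborel)
    \<le> (\<integral>\<^sup>+s. ennreal (indicator {s. 0 < e + c * s} s * \<bar>f' s\<bar> powr p) \<partial>lborel)"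
proof (cases "T = {}")
  case True
  then show ?thesis
    using supp p by simp
next
  case False
  define A where "A s = \<bar>c\<bar> powr p / (e + c * s) powr p * \<bar>f s\<bar> powr p" for s
  define B where "B s = \<bar>f' s\<bar> powr p" for s
  have f_cont: "continuous_on UNIV f"
    using f' by (meson DERIV_isCont continuous_at_imp_continuous_on)
  obtain a b where ab: "a \<le> b" and pos_ab: "\<And>s. s \<in> {a..b} \<Longrightarrow> 0 < e + c * s"
    and f_zero: "\<And>s. s \<notin> {a<..<b} \<Longrightarrow> f s = 0"
    using interval_around_compact_support[OF T False f_cont supp pos] by blast
  have hardy: "((p - 1) / p) powr p * integral {a..b} A \<le> integral {a..b} B"
    unfolding A_def B_def using f_zero[of a] f_zero[of b] f' continuous_on_subset[OF f'_cont]
    by (intro hardy_interval[OF p ab pos_ab]) auto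
  have "continuous_on {a..b} A"
    unfolding A_def using p pos_ab continuous_on_subset[OF f_cont]
    by (intro continuous_on_hardy_integrand) auto
  then have A_int: "(A has_integral integral {a..b} A) {a..b}"
    using integrable_continuous_interval by blast
  have "continuous_on {a..b} B"
    unfolding B_def using p
    by (intro continuous_on_powr' continuous_intros continuous_on_subset[OF f'_cont]) auto
  then have B_int: "(B has_integral integral {a..b} B) {a..b}"
    using integrable_continuous_interval by blast
  have A_nonneg: "A s \<ge> 0" and B_nonneg: "B s \<ge> 0" for s
    by (simp_all add: A_def B_def)
  have indicator_A: "indicator {s. 0 < e + c * s} s * A s = indicator {a..b} s * A s" for s
    using pos_ab f_zero[of s] p by (cases "s \<in> {a..b}") (auto simp: A_def)
  have "ennreal (((p - 1) / p) powr p)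
        * (\<integral>\<^sup>+s. ennreal (indicator {s. 0 < e + c * s} s * A s) \<partial>lborel)
      = ennreal (((p - 1) / p) powr p) * ennreal (integral {a..b} A)"
    by (simp only: indicator_A nn_integral_has_integral_lebesgue[OF A_nonneg A_int])
  also have "\<dots> = ennreal (((p - 1) / p) powr p * integral {a..b} A)"
    using A_int A_nonneg by (simp add: ennreal_mult integral_nonneg has_integral_integrable)
  also have "\<dots> \<le> ennreal (integral {a..b} B)"
    using hardy by (rule ennreal_leI)
  also have "\<dots> = (\<integral>\<^sup>+s. ennreal (indicator {a..b} s * B s) \<partial>lborel)"
    by (rule nn_integral_has_integral_lebesgue[OF B_nonneg B_int, symmetric])
  also have "\<dots> \<le> (\<integral>\<^sup>+s. ennreal (indicator {s. 0 < e + c * s} s * B s) \<partial>lborel)"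
    using pos_ab B_nonneg by (intro nn_integral_mono ennreal_leI) (auto simp: indicator_def)
  finally show ?thesis
    unfolding A_def B_def .
qed

lemma nn_integral_lborel_translate:
  fixes G :: "'a::euclidean_space \<Rightarrow> ennreal" and c :: 'a
  assumes [measurable]: "G \<in> borel_measurable borel"
  shows "(\<integral>\<^sup>+z. G (z + c) \<partial>lborel) = (\<integral>\<^sup>+z. G z \<partial>lborel)"
proof -
  have "(\<integral>\<^sup>+z. G z \<partial>lborel) = (\<integral>\<^sup>+z. G z \<partial>distr lborel borel ((+) c))"
    by (simp add: lborel_distr_plus)
  also have "\<dots> = (\<integral>\<^sup>+z. G (c + z) \<partial>lborel)"
    by (subst nn_integral_distr) auto
  finally show ?thesis
    by (simp add: add.commute)
qed

text \<open>Every point lies on exactly one line in direction \<open>a\<close> through the slab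
  \<open>0 \<le> z \<bullet> b < 1\<close>, so Lebesgue measure disintegrates into the lines through that slab.\<close>

lemma nn_integral_lborel_lines:
  fixes F :: "'a::euclidean_space \<Rightarrow> ennreal" and a b :: 'a
  assumes F[measurable]: "F \<in> borel_measurable borel" and ab: "a \<bullet> b = 1"
  shows "(\<integral>\<^sup>+z. F z \<partial>lborel)
    = (\<integral>\<^sup>+z. indicator {z. z \<bullet> b \<in> {0..<1}} z * (\<integral>\<^sup>+s. F (z + s *\<^sub>R a) \<partial>lborel) \<partial>lborel)"
proof -
  define I where "I z = {r. z \<bullet> b - r \<in> {0..<1}}" for z
  have "I z = {z \<bullet> b - 1<..z \<bullet> b}" for z
    by (auto simp: I_def)
  then have unit: "(\<integral>\<^sup>+s. indicator (I z) s \<partial>lborel) = 1" for z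
    by simp
  have "(\<integral>\<^sup>+z. F z \<partial>lborel) = (\<integral>\<^sup>+z. F z * (\<integral>\<^sup>+s. indicator (I z) s \<partial>lborel) \<partial>lborel)"
    by (simp add: unit)
  also have "\<dots> = (\<integral>\<^sup>+z. (\<integral>\<^sup>+s. F z * indicator (I z) s \<partial>lborel) \<partial>lborel)"
    unfolding I_def by (intro nn_integral_cong nn_integral_cmult[symmetric]) measurable
  also have "\<dots> = (\<integral>\<^sup>+s. (\<integral>\<^sup>+z. F z * indicator (I z) s \<partial>lborel) \<partial>lborel)"
    unfolding I_def by (rule lborel_pair.Fubini'[symmetric]) measurable
  also have "\<dots> = (\<integral>\<^sup>+s. (\<integral>\<^sup>+z. F (z + s *\<^sub>R a) * indicator {z. z \<bullet> b \<in> {0..<1}} z \<partial>lborel) \<partial>lborel)"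
  proof (rule nn_integral_cong)
    fix s :: real
    have "(\<lambda>z. F z * indicator (I z) s) \<in> borel_measurable borel"
      unfolding I_def by measurable
    from nn_integral_lborel_translate[OF this, of "s *\<^sub>R a"]
    show "(\<integral>\<^sup>+z. F z * indicator (I z) s \<partial>lborel)
        = (\<integral>\<^sup>+z. F (z + s *\<^sub>R a) * indicator {z. z \<bullet> b \<in> {0..<1}} z \<partial>lborel)"
      using ab by (simp add: I_def inner_add_left indicator_def)
  qed
  also have "\<dots> = (\<integral>\<^sup>+z. (\<integral>\<^sup>+s. F (z + s *\<^sub>R a) * indicator {z. z \<bullet> b \<in> {0..<1}} z \<partial>lborel) \<partial>lborel)"
    by (rule lborel_pair.Fubini') measurable
  finally show ?thesis
    by (simp add: nn_integral_multc mult.commute)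
qed

lemma nn_integral_lborel_prod:
  fixes G :: "'a::euclidean_space \<times> 'b::euclidean_space \<Rightarrow> ennreal"
  assumes [measurable]: "G \<in> borel_measurable borel"
  shows "(\<integral>\<^sup>+\<xi>. G \<xi> \<partial>lborel) = (\<integral>\<^sup>+x. (\<integral>\<^sup>+w. G (x, w) \<partial>lborel) \<partial>lborel)"
  by (subst lborel_prod[symmetric], rule lborel.nn_integral_fst[symmetric])
     (unfold lborel_prod, measurable)

lemma borel_measurable_vec_nth[measurable (raw)]:
  "f \<in> M \<rightarrow>\<^sub>M (borel :: ('a::topological_space ^ 'n) measure) \<Longrightarrow> (\<lambda>x. f x $ i) \<in> M \<rightarrow>\<^sub>M borel"
  by (erule measurable_compose) (intro borel_measurable_continuous_onI continuous_intros)

lemma borel_measurable_fst[measurable]: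
  "fst \<in> (borel :: ('a::topological_space \<times> 'b::topological_space) measure) \<rightarrow>\<^sub>M borel"
  by (intro borel_measurable_continuous_onI continuous_on_fst continuous_on_id)

lemma borel_measurable_snd[measurable]:
  "snd \<in> (borel :: ('a::topological_space \<times> 'b::topological_space) measure) \<rightarrow>\<^sub>M borel"
  by (intro borel_measurable_continuous_onI continuous_on_snd continuous_on_id)

lemma borel_measurable_nn_integral_line:
  fixes G :: "'a::euclidean_space \<Rightarrow> ennreal" and V :: "'a \<Rightarrow> 'a"
  assumes [measurable]: "G \<in> borel_measurable borel" "V \<in> borel_measurable borel"
  shows "(\<lambda>x. \<integral>\<^sup>+s. G (x + s *\<^sub>R V x) \<partial>lborel) \<in> borel_measurable borel"
proof -
  have "(\<lambda>(x, s). G (x + s *\<^sub>R V x)) \<in> borel_measurable (borel \<Otimes>\<^sub>M lborel)"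
    by measurable
  then show ?thesis
    by (rule lborel.borel_measurable_nn_integral)
qed

lemma continuous_on_Xvf: "continuous_on UNIV (Xvf i)"
  unfolding Xvf_def by (intro continuous_intros)

lemma continuous_on_Yvf: "continuous_on UNIV (Yvf i)"
  unfolding Yvf_def by (intro continuous_intros)

lemma borel_measurable_Xvf[measurable]: "Xvf i \<in> borel_measurable borel"
  by (rule borel_measurable_continuous_onI[OF continuous_on_Xvf])

lemma borel_measurable_Yvf[measurable]: "Yvf i \<in> borel_measurable borel"
  by (rule borel_measurable_continuous_onI[OF continuous_on_Yvf])

lemma nn_integral_Yvf_lines:
  fixes G :: "'n::finite heis \<Rightarrow> ennreal" and i :: 'n
  assumes G[measurable]: "G \<in> borel_measurable borel"
  shows "(\<integral>\<^sup>+\<xi>. G \<xi> \<partial>lborel)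
    = (\<integral>\<^sup>+\<xi>. indicator {\<xi>. fst (snd \<xi>) $ i \<in> {0..<1}} \<xi>
         * (\<integral>\<^sup>+s. G (\<xi> + s *\<^sub>R Yvf i \<xi>) \<partial>lborel) \<partial>lborel)"
proof -
  define b :: "(real ^ 'n) \<times> real" where "b = (axis i 1, 0)"
  have "(\<integral>\<^sup>+\<xi>. G \<xi> \<partial>lborel) = (\<integral>\<^sup>+x. (\<integral>\<^sup>+w. G (x, w) \<partial>lborel) \<partial>lborel)"
    by (rule nn_integral_lborel_prod) measurable
  also have "\<dots> = (\<integral>\<^sup>+x. (\<integral>\<^sup>+w. indicator {w. w \<bullet> b \<in> {0..<1}} w *
        (\<integral>\<^sup>+s. G (x, w + s *\<^sub>R (axis i 1, - 2 * x $ i)) \<partial>lborel) \<partial>lborel) \<partial>lborel)"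
    by (intro nn_integral_cong nn_integral_lborel_lines) (measurable, simp add: b_def inner_axis_axis)
  also have "\<dots> = (\<integral>\<^sup>+x. (\<integral>\<^sup>+w. indicator {\<xi>. fst (snd \<xi>) $ i \<in> {0..<1}} (x, w)
        * (\<integral>\<^sup>+s. G ((x, w) + s *\<^sub>R Yvf i (x, w)) \<partial>lborel) \<partial>lborel) \<partial>lborel)"
    by (intro nn_integral_cong) (simp add: b_def Yvf_def indicator_def inner_prod_def inner_axis)
  also have "\<dots> = (\<integral>\<^sup>+\<xi>. indicator {\<xi>. fst (snd \<xi>) $ i \<in> {0..<1}} \<xi>
         * (\<integral>\<^sup>+s. G (\<xi> + s *\<^sub>R Yvf i \<xi>) \<partial>lborel) \<partial>lborel)"
    by (rule nn_integral_lborel_prod[symmetric])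
      (intro borel_measurable_times_ennreal borel_measurable_nn_integral_line; measurable)
  finally show ?thesis .
qed

text \<open>Integration over \<open>y\<close> first: the lines of \<open>Xvf i\<close> lie in the slices of fixed \<open>y\<close>.\<close>

lemma nn_integral_lborel_heis_snd_first:
  fixes G :: "'n::finite heis \<Rightarrow> ennreal"
  assumes G[measurable]: "G \<in> borel_measurable borel"
  shows "(\<integral>\<^sup>+\<xi>. G \<xi> \<partial>lborel) = (\<integral>\<^sup>+y. (\<integral>\<^sup>+v. G (fst v, y, snd v) \<partial>lborel) \<partial>lborel)"
proof -
  have "(\<integral>\<^sup>+\<xi>. G \<xi> \<partial>lborel) = (\<integral>\<^sup>+x. (\<integral>\<^sup>+y. (\<integral>\<^sup>+t. G (x, y, t) \<partial>lborel) \<partial>lborel) \<partial>lborel)"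
    by (subst nn_integral_lborel_prod) (auto intro!: nn_integral_cong nn_integral_lborel_prod)
  also have "\<dots> = (\<integral>\<^sup>+y. (\<integral>\<^sup>+x. (\<integral>\<^sup>+t. G (x, y, t) \<partial>lborel) \<partial>lborel) \<partial>lborel)"
  proof (rule lborel_pair.Fubini'[symmetric])
    have "(\<lambda>(z, t). G (fst z, snd z, t)) \<in> borel_measurable ((lborel \<Otimes>\<^sub>M lborel) \<Otimes>\<^sub>M lborel)"
      unfolding lborel_prod by measurable
    then have "(\<lambda>z. \<integral>\<^sup>+t. G (fst z, snd z, t) \<partial>lborel) \<in> borel_measurable (lborel \<Otimes>\<^sub>M lborel)"
      by (rule lborel.borel_measurable_nn_integral)
    then show "(\<lambda>(x, y). \<integral>\<^sup>+t. G (x, y, t) \<partial>lborel) \<in> borel_measurable (lborel \<Otimes>\<^sub>M lborel)"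
      by (simp add: case_prod_beta')
  qed
  also have "\<dots> = (\<integral>\<^sup>+y. (\<integral>\<^sup>+v. G (fst v, y, snd v) \<partial>lborel) \<partial>lborel)"
  proof (rule nn_integral_cong)
    fix y :: "real ^ 'n"
    have "(\<lambda>v. G (fst v, y, snd v)) \<in> borel_measurable borel"
      by measurable
    from nn_integral_lborel_prod[OF this]
    show "(\<integral>\<^sup>+x. (\<integral>\<^sup>+t. G (x, y, t) \<partial>lborel) \<partial>lborel) = (\<integral>\<^sup>+v. G (fst v, y, snd v) \<partial>lborel)"
      by simp
  qed
  finally show ?thesis .
qed

lemma nn_integral_Xvf_lines:
  fixes G :: "'n::finite heis \<Rightarrow> ennreal" and i :: 'n
  assumes G[measurable]: "G \<in> borel_measurable borel"
  shows "(\<integral>\<^sup>+\<xi>. G \<xi> \<partial>lborel)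
    = (\<integral>\<^sup>+\<xi>. indicator {\<xi>. fst \<xi> $ i \<in> {0..<1}} \<xi>
         * (\<integral>\<^sup>+s. G (\<xi> + s *\<^sub>R Xvf i \<xi>) \<partial>lborel) \<partial>lborel)"
proof -
  define b :: "(real ^ 'n) \<times> real" where "b = (axis i 1, 0)"
  define H where "H \<xi> = indicator {\<xi>. fst \<xi> $ i \<in> {0..<1}} \<xi>
      * (\<integral>\<^sup>+s. G (\<xi> + s *\<^sub>R Xvf i \<xi>) \<partial>lborel)" for \<xi> :: "'n heis"
  have [measurable]: "H \<in> borel_measurable borel"
    unfolding H_def
    by (intro borel_measurable_times_ennreal borel_measurable_nn_integral_line; measurable)
  have "(\<integral>\<^sup>+\<xi>. G \<xi> \<partial>lborel) = (\<integral>\<^sup>+y. (\<integral>\<^sup>+v. G (fst v, y, snd v) \<partial>lborel) \<partial>lborel)"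
    by (rule nn_integral_lborel_heis_snd_first[OF G])
  also have "\<dots> = (\<integral>\<^sup>+y. (\<integral>\<^sup>+v. H (fst v, y, snd v) \<partial>lborel) \<partial>lborel)"
  proof (rule nn_integral_cong)
    fix y :: "real ^ 'n"
    have "(\<integral>\<^sup>+v. G (fst v, y, snd v) \<partial>lborel) = (\<integral>\<^sup>+v. indicator {w. w \<bullet> b \<in> {0..<1}} v *
        (\<integral>\<^sup>+s. G (fst (v + s *\<^sub>R (axis i 1, 2 * y $ i)), y, snd (v + s *\<^sub>R (axis i 1, 2 * y $ i))) \<partial>lborel) \<partial>lborel)"
      by (rule nn_integral_lborel_lines) (measurable, simp add: b_def inner_axis_axis)
    also have "\<dots> = (\<integral>\<^sup>+v. H (fst v, y, snd v) \<partial>lborel)"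
      by (intro nn_integral_cong) (simp add: H_def b_def Xvf_def indicator_def inner_prod_def inner_axis)
    finally show "(\<integral>\<^sup>+v. G (fst v, y, snd v) \<partial>lborel) = (\<integral>\<^sup>+v. H (fst v, y, snd v) \<partial>lborel)" .
  qed
  also have "\<dots> = (\<integral>\<^sup>+\<xi>. H \<xi> \<partial>lborel)"
    by (rule nn_integral_lborel_heis_snd_first[symmetric]) measurable
  finally show ?thesis
    unfolding H_def .
qed

lemma sets_borel_Xvf_slab: "{\<xi>::'n::finite heis. fst \<xi> $ i \<in> {0..<1}} \<in> sets borel"
  by measurable

lemma sets_borel_Yvf_slab: "{\<xi>::'n::finite heis. fst (snd \<xi>) $ i \<in> {0..<1}} \<in> sets borel"
  by measurable

lemma C0_infD:
  fixes u :: "'a::euclidean_space \<Rightarrow> real"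
  assumes "u \<in> C0_inf U"
  shows C0_inf_continuous: "continuous_on UNIV u"
    and C0_inf_has_derivative: "(u has_derivative frechet_derivative u (at x)) (at x)"
    and C0_inf_continuous_derivative: "continuous_on UNIV (\<lambda>x. frechet_derivative u (at x) v)"
    and C0_inf_compact_support: "compact (closure {x. u x \<noteq> 0})"
    and C0_inf_support_subset: "closure {x. u x \<noteq> 0} \<subseteq> U"
proof -
  have "Ck 0 u" and C1: "Ck 1 u"
    using assms by (auto simp: C0_inf_def smooth_def simp del: Ck.simps)
  then show "continuous_on UNIV u" and "continuous_on UNIV (\<lambda>x. frechet_derivative u (at x) v)"
    by simp_all
  from C1 have "u differentiable at x"
    by (simp add: differentiable_on_def)
  then show "(u has_derivative frechet_derivative u (at x)) (at x)"
    by (simp add: frechet_derivative_works)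
  show "compact (closure {x. u x \<noteq> 0})" and "closure {x. u x \<noteq> 0} \<subseteq> U"
    using assms by (auto simp: C0_inf_def)
qed

lemma continuous_on_frechet_derivative_field:
  fixes u :: "'a::euclidean_space \<Rightarrow> real" and V :: "'a \<Rightarrow> 'a"
  assumes "\<And>x. (u has_derivative frechet_derivative u (at x)) (at x)"
    and "\<And>v. continuous_on UNIV (\<lambda>x. frechet_derivative u (at x) v)"
    and "continuous_on UNIV V"
  shows "continuous_on UNIV (\<lambda>x. frechet_derivative u (at x) (V x))"
proof -
  have "frechet_derivative u (at x) (V x) = (\<Sum>b\<in>Basis. (V x \<bullet> b) * frechet_derivative u (at x) b)" for x
    using Linear_Algebra.linear_componentwise[OF has_derivative_linear[OF assms(1)[of x]], of "V x" 1] by simp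
  then show ?thesis
    using assms by (simp only:) (intro continuous_intros)
qed

lemma frechet_derivative_eq_0_outside_support:
  fixes u :: "'a::real_normed_vector \<Rightarrow> real"
  assumes "x \<notin> closure {x. u x \<noteq> 0}"
  shows "frechet_derivative u (at x) v = 0"
proof -
  have "(u has_derivative (\<lambda>_. 0)) (at x)"
  proof (rule has_derivative_transform_within_open)
    show "((\<lambda>_. 0) has_derivative (\<lambda>_. 0)) (at x)"
      by simp
    show "open (- closure {x. u x \<noteq> 0})" and "x \<in> - closure {x. u x \<noteq> 0}"
      using assms by auto
    show "0 = u y" if "y \<in> - closure {x. u x \<noteq> 0}" for y
      using that closure_subset by force
  qed
  then show ?thesis
    by (metis frechet_derivative_at)
qed

lemma infdist_frontier_halfspace:
  fixes \<nu> :: "'a::euclidean_space"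
  assumes \<nu>: "norm \<nu> = 1" and x: "x \<in> halfspace \<nu> d"
  shows "infdist x (frontier (halfspace \<nu> d)) = x \<bullet> \<nu> - d"
proof -
  have "\<nu> \<noteq> 0"
    using \<nu> by auto
  then have "frontier {y. \<nu> \<bullet> y > d} = {y. \<nu> \<bullet> y = d}"
    by (intro frontier_halfspace_gt) simp
  then have "frontier (halfspace \<nu> d) = {y. y \<bullet> \<nu> = d}"
    by (simp add: halfspace_def inner_commute)
  moreover have "infdist x {y. y \<bullet> \<nu> = d} = x \<bullet> \<nu> - d"
  proof (rule antisym)
    define y where "y = x - (x \<bullet> \<nu> - d) *\<^sub>R \<nu>"
    have "y \<bullet> \<nu> = d"
      using \<nu> by (simp add: y_def inner_diff_left norm_eq_1)
    then have "infdist x {y. y \<bullet> \<nu> = d} \<le> dist x y"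
      by (intro infdist_le) auto
    also have "dist x y = x \<bullet> \<nu> - d"
      using x \<nu> by (simp add: y_def dist_norm halfspace_def)
    finally show "infdist x {y. y \<bullet> \<nu> = d} \<le> x \<bullet> \<nu> - d" .
    have "x \<bullet> \<nu> - d \<le> dist x z" if "z \<bullet> \<nu> = d" for z
    proof -
      have "x \<bullet> \<nu> - d = (x - z) \<bullet> \<nu>"
        using that by (simp add: inner_diff_left)
      also have "\<dots> \<le> norm (x - z) * norm \<nu>"
        by (rule norm_cauchy_schwarz)
      finally show ?thesis
        using \<nu> by (simp add: dist_norm)
    qed
    with \<open>y \<bullet> \<nu> = d\<close> show "x \<bullet> \<nu> - d \<le> infdist x {y. y \<bullet> \<nu> = d}"
      by (subst infdist_notempty) (auto intro!: cINF_greatest)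
  qed
  ultimately show ?thesis
    by simp
qed

lemma compact_line_preimage:
  fixes K :: "'a::real_normed_vector set"
  assumes K: "compact K" and w: "w \<noteq> 0"
  shows "compact {s. \<xi> + s *\<^sub>R w \<in> K}"
proof -
  have "closed ((\<lambda>s. \<xi> + s *\<^sub>R w) -` K)"
    using compact_imp_closed[OF K] by (intro continuous_closed_vimage) (auto intro!: continuous_intros)
  then have "closed {s. \<xi> + s *\<^sub>R w \<in> K}"
    by (simp add: vimage_def)
  moreover obtain R where R: "\<And>x. x \<in> K \<Longrightarrow> norm x \<le> R"
    using compact_imp_bounded[OF K] by (auto simp: bounded_iff)
  have "\<bar>s\<bar> \<le> (R + norm \<xi>) / norm w" if "\<xi> + s *\<^sub>R w \<in> K" for s
  proof -
    have "\<bar>s\<bar> * norm w = norm ((\<xi> + s *\<^sub>R w) - \<xi>)"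
      by simp
    also have "\<dots> \<le> R + norm \<xi>"
      using R[OF that] norm_triangle_ineq4[of "\<xi> + s *\<^sub>R w" \<xi>] by simp
    finally show ?thesis
      using w by (simp add: field_simps)
  qed
  then have "bounded {s. \<xi> + s *\<^sub>R w \<in> K}"
    by (auto simp: bounded_iff)
  ultimately show ?thesis
    by (simp add: compact_eq_bounded_closed)
qed

lemma has_real_derivative_along_line:
  fixes u :: "'a::real_normed_vector \<Rightarrow> real"
  assumes "(u has_derivative D) (at (\<xi> + s *\<^sub>R w))"
  shows "((\<lambda>s. u (\<xi> + s *\<^sub>R w)) has_real_derivative D w) (at s)"
proof -
  have "((\<lambda>s. \<xi> + s *\<^sub>R w) has_derivative (\<lambda>h. h *\<^sub>R w)) (at s)"
    by (auto intro!: derivative_eq_intros)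
  from diff_chain_at[OF this assms]
  have "((\<lambda>s. u (\<xi> + s *\<^sub>R w)) has_derivative (\<lambda>h. D (h *\<^sub>R w))) (at s)"
    by (simp add: o_def)
  moreover have "linear D"
    using assms by (rule has_derivative_linear)
  ultimately show ?thesis
    by (simp add: has_field_derivative_def linear_cmul mult_commute_abs)
qed

lemma hardy_halfspace_line:
  fixes \<nu> \<xi> w :: "'a::euclidean_space" and u :: "'a \<Rightarrow> real"
  assumes \<nu>: "norm \<nu> = 1" and p: "p > 1" and u: "u \<in> C0_inf (halfspace \<nu> d)"
  shows "ennreal (((p - 1) / p) powr p) * (\<integral>\<^sup>+s. ennreal (indicator (halfspace \<nu> d) (\<xi> + s *\<^sub>R w)
           * (\<bar>w \<bullet> \<nu>\<bar> powr p / infdist (\<xi> + s *\<^sub>R w) (frontier (halfspace \<nu> d)) powr p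
              * \<bar>u (\<xi> + s *\<^sub>R w)\<bar> powr p)) \<partial>lborel)
    \<le> (\<integral>\<^sup>+s. ennreal (indicator (halfspace \<nu> d) (\<xi> + s *\<^sub>R w)
           * \<bar>frechet_derivative u (at (\<xi> + s *\<^sub>R w)) w\<bar> powr p) \<partial>lborel)"
    (is "_ * ?L \<le> ?R")
proof (cases "w \<bullet> \<nu> = 0")
  case True
  then show ?thesis
    using p by simp
next
  case False
  define c where "c = w \<bullet> \<nu>"
  define e where "e = \<xi> \<bullet> \<nu> - d"
  define f where "f s = u (\<xi> + s *\<^sub>R w)" for s
  define f' where "f' s = frechet_derivative u (at (\<xi> + s *\<^sub>R w)) w" for s
  define K where "K = closure {x. u x \<noteq> 0}"
  define T where "T = {s. \<xi> + s *\<^sub>R w \<in> K}"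
  have line_inner: "(\<xi> + s *\<^sub>R w) \<bullet> \<nu> - d = e + c * s" for s
    by (simp add: e_def c_def inner_add_left algebra_simps)
  have in_halfspace: "\<xi> + s *\<^sub>R w \<in> halfspace \<nu> d \<longleftrightarrow> 0 < e + c * s" for s
    using line_inner[of s] by (auto simp: halfspace_def)
  have "compact T"
    unfolding T_def K_def using False
    by (intro compact_line_preimage C0_inf_compact_support[OF u]) auto
  moreover have "{s. f s \<noteq> 0} \<subseteq> T"
    using closure_subset by (force simp: T_def K_def f_def)
  moreover have "0 < e + c * s" if "s \<in> T" for s
    using that C0_inf_support_subset[OF u] in_halfspace by (auto simp: T_def K_def)
  moreover have "(f has_real_derivative f' s) (at s)" for s
    unfolding f_def f'_def by (rule has_real_derivative_along_line[OF C0_inf_has_derivative[OF u]])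
  moreover have "continuous_on UNIV f'"
    unfolding f'_def
    by (rule continuous_on_compose2[OF C0_inf_continuous_derivative[OF u]]) (auto intro!: continuous_intros)
  ultimately have "ennreal (((p - 1) / p) powr p) * (\<integral>\<^sup>+s. ennreal (indicator {s. 0 < e + c * s} s *
            (\<bar>c\<bar> powr p / (e + c * s) powr p * \<bar>f s\<bar> powr p)) \<partial>lborel)
    \<le> (\<integral>\<^sup>+s. ennreal (indicator {s. 0 < e + c * s} s * \<bar>f' s\<bar> powr p) \<partial>lborel)"
    by (rule hardy_real_line[OF p])
  moreover have "?L = (\<integral>\<^sup>+s. ennreal (indicator {s. 0 < e + c * s} s *
            (\<bar>c\<bar> powr p / (e + c * s) powr p * \<bar>f s\<bar> powr p)) \<partial>lborel)"
    using infdist_frontier_halfspace[OF \<nu>] in_halfspace line_inner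
    by (intro nn_integral_cong) (simp add: indicator_def c_def f_def)
  moreover have "?R = (\<integral>\<^sup>+s. ennreal (indicator {s. 0 < e + c * s} s * \<bar>f' s\<bar> powr p) \<partial>lborel)"
    using in_halfspace by (intro nn_integral_cong) (simp add: indicator_def f'_def)
  ultimately show ?thesis
    by simp
qed

lemma nn_integral_compact_support_finite:
  fixes h :: "'a::euclidean_space \<Rightarrow> real"
  assumes h: "continuous_on UNIV h" and K: "compact K" and zero: "\<And>x. x \<notin> K \<Longrightarrow> h x = 0"
  shows "(\<integral>\<^sup>+x. ennreal \<bar>h x\<bar> \<partial>lborel) < \<infinity>"
proof -
  obtain B where B: "\<And>x. x \<in> K \<Longrightarrow> \<bar>h x\<bar> \<le> B"
    using compact_imp_bounded[OF compact_continuous_image[OF continuous_on_subset[OF h] K]]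
    by (auto simp: bounded_iff)
  have "(\<integral>\<^sup>+x. ennreal \<bar>h x\<bar> \<partial>lborel) \<le> (\<integral>\<^sup>+x. ennreal B * indicator K x \<partial>lborel)"
    using B zero by (intro nn_integral_mono) (auto simp: indicator_def ennreal_leI)
  also have "\<dots> = ennreal B * emeasure lborel K"
    using K by (intro nn_integral_cmult_indicator) (simp add: compact_imp_closed borel_closed)
  also have "\<dots> < \<infinity>"
    using emeasure_compact_finite[OF K] by (simp add: ennreal_mult_less_top)
  finally show ?thesis .
qed

lemma nn_integral_C0_inf_derivative_finite:
  fixes u :: "'a::euclidean_space \<Rightarrow> real" and V :: "'a \<Rightarrow> 'a"
  assumes u: "u \<in> C0_inf U" and V: "continuous_on UNIV V" and p: "p > 0"
  shows "(\<integral>\<^sup>+x. ennreal (\<bar>frechet_derivative u (at x) (V x)\<bar> powr p) \<partial>lborel) < \<infinity>"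
proof -
  have "continuous_on UNIV (\<lambda>x. frechet_derivative u (at x) (V x))"
    using C0_inf_has_derivative[OF u] C0_inf_continuous_derivative[OF u] V
    by (rule continuous_on_frechet_derivative_field)
  then have "(\<integral>\<^sup>+x. ennreal \<bar>\<bar>frechet_derivative u (at x) (V x)\<bar> powr p\<bar> \<partial>lborel) < \<infinity>"
    using p frechet_derivative_eq_0_outside_support
    by (intro nn_integral_compact_support_finite[OF _ C0_inf_compact_support[OF u]]
        continuous_on_powr' continuous_intros) auto
  then show ?thesis
    by simp
qed

lemma set_integral_lborel_eq_nn_integral:
  fixes f :: "'a::euclidean_space \<Rightarrow> real"
  assumes "(\<lambda>x. indicator A x * f x) \<in> borel_measurable borel" and "\<And>x. 0 \<le> f x"
  shows "(LINT x:A|lborel. f x) = enn2real (\<integral>\<^sup>+x. ennreal (indicator A x * f x) \<partial>lborel)"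
proof -
  have "(LINT x:A|lborel. f x) = integral\<^sup>L lborel (\<lambda>x. indicator A x * f x)"
    by (simp add: set_lebesgue_integral_def)
  also have "\<dots> = enn2real (\<integral>\<^sup>+x. ennreal (indicator A x * f x) \<partial>lborel)"
    using assms by (intro integral_eq_nn_integral) auto
  finally show ?thesis .
qed

lemma hardy_halfspace_along_field:
  fixes \<nu> :: "'a::euclidean_space" and u :: "'a \<Rightarrow> real" and V :: "'a \<Rightarrow> 'a"
  assumes \<nu>: "norm \<nu> = 1" and p: "p > 1" and u: "u \<in> C0_inf (halfspace \<nu> d)"
    and V: "continuous_on UNIV V" and V_line: "\<And>\<xi> s. V (\<xi> + s *\<^sub>R V \<xi>) = V \<xi>"
    and lines: "\<And>G. G \<in> borel_measurable borel \<Longrightarrow>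
      (\<integral>\<^sup>+\<xi>. G \<xi> \<partial>lborel) = (\<integral>\<^sup>+\<xi>. indicator S \<xi> * (\<integral>\<^sup>+s. G (\<xi> + s *\<^sub>R V \<xi>) \<partial>lborel) \<partial>lborel)"
    and S[measurable]: "S \<in> sets borel"
  shows "((p - 1) / p) powr p *
           (LINT \<xi>:halfspace \<nu> d|lborel.
              \<bar>inner (V \<xi>) \<nu>\<bar> powr p / infdist \<xi> (frontier (halfspace \<nu> d)) powr p * \<bar>u \<xi>\<bar> powr p)
         \<le> (LINT \<xi>:halfspace \<nu> d|lborel. \<bar>vf_apply V u \<xi>\<bar> powr p)"
proof -
  define H where "H = halfspace \<nu> d"
  define t where "t = ((p - 1) / p) powr p"
  define L where "L \<xi> = indicator H \<xi>
    * (\<bar>V \<xi> \<bullet> \<nu>\<bar> powr p / infdist \<xi> (frontier H) powr p * \<bar>u \<xi>\<bar> powr p)" for \<xi>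
  define R where "R \<xi> = indicator H \<xi> * \<bar>frechet_derivative u (at \<xi>) (V \<xi>)\<bar> powr p" for \<xi>
  have "open H"
    unfolding H_def halfspace_def by (intro open_Collect_less continuous_intros)
  then have [measurable]: "H \<in> sets borel"
    by simp
  have [measurable]: "u \<in> borel_measurable borel" "V \<in> borel_measurable borel"
    "(\<lambda>\<xi>. frechet_derivative u (at \<xi>) (V \<xi>)) \<in> borel_measurable borel"
    "(\<lambda>\<xi>. infdist \<xi> (frontier H)) \<in> borel_measurable borel"
    using C0_inf_continuous[OF u] V continuous_on_frechet_derivative_field[OF
        C0_inf_has_derivative[OF u] C0_inf_continuous_derivative[OF u] V]
    by (auto intro!: borel_measurable_continuous_onI continuous_intros)
  have L_meas[measurable]: "L \<in> borel_measurable borel"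
    and R_meas[measurable]: "R \<in> borel_measurable borel"
    unfolding L_def R_def by measurable
  have "(\<integral>\<^sup>+\<xi>. ennreal (R \<xi>) \<partial>lborel)
      \<le> (\<integral>\<^sup>+\<xi>. ennreal (\<bar>frechet_derivative u (at \<xi>) (V \<xi>)\<bar> powr p) \<partial>lborel)"
    by (intro nn_integral_mono) (simp add: R_def indicator_def)
  then have R_finite: "(\<integral>\<^sup>+\<xi>. ennreal (R \<xi>) \<partial>lborel) < \<infinity>"
    using nn_integral_C0_inf_derivative_finite[OF u V] p by (auto intro: le_less_trans)
  have line: "ennreal t * (\<integral>\<^sup>+s. ennreal (L (\<xi> + s *\<^sub>R V \<xi>)) \<partial>lborel)
      \<le> (\<integral>\<^sup>+s. ennreal (R (\<xi> + s *\<^sub>R V \<xi>)) \<partial>lborel)" for \<xi>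
    using hardy_halfspace_line[OF \<nu> p u, of \<xi> "V \<xi>"]
    by (simp add: L_def R_def V_line H_def t_def)
  have "(\<lambda>\<xi>. indicator S \<xi> * (\<integral>\<^sup>+s. ennreal (L (\<xi> + s *\<^sub>R V \<xi>)) \<partial>lborel))
      \<in> borel_measurable borel"
    by (intro borel_measurable_times_ennreal borel_measurable_nn_integral_line; measurable)
  then have "ennreal t * (\<integral>\<^sup>+\<xi>. ennreal (L \<xi>) \<partial>lborel)
      = (\<integral>\<^sup>+\<xi>. ennreal t * (indicator S \<xi> * (\<integral>\<^sup>+s. ennreal (L (\<xi> + s *\<^sub>R V \<xi>)) \<partial>lborel)) \<partial>lborel)"
    by (subst lines) (measurable, rule nn_integral_cmult[symmetric], simp)
  also have "\<dots> = (\<integral>\<^sup>+\<xi>. indicator S \<xi> * (ennreal t * (\<integral>\<^sup>+s. ennreal (L (\<xi> + s *\<^sub>R V \<xi>)) \<partial>lborel)) \<partial>lborel)"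
    by (simp add: mult_ac)
  also have "\<dots> \<le> (\<integral>\<^sup>+\<xi>. indicator S \<xi> * (\<integral>\<^sup>+s. ennreal (R (\<xi> + s *\<^sub>R V \<xi>)) \<partial>lborel) \<partial>lborel)"
    by (intro nn_integral_mono mult_left_mono line) auto
  also have "\<dots> = (\<integral>\<^sup>+\<xi>. ennreal (R \<xi>) \<partial>lborel)"
    by (rule lines[symmetric]) measurable
  finally have "enn2real (ennreal t * (\<integral>\<^sup>+\<xi>. ennreal (L \<xi>) \<partial>lborel))
      \<le> enn2real (\<integral>\<^sup>+\<xi>. ennreal (R \<xi>) \<partial>lborel)"
    using R_finite by (intro enn2real_mono) auto
  moreover have "(LINT \<xi>:H|lborel. \<bar>V \<xi> \<bullet> \<nu>\<bar> powr p / infdist \<xi> (frontier H) powr p * \<bar>u \<xi>\<bar> powr p)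
      = enn2real (\<integral>\<^sup>+\<xi>. ennreal (L \<xi>) \<partial>lborel)"
    unfolding L_def
    by (rule set_integral_lborel_eq_nn_integral[OF L_meas[unfolded L_def[abs_def]]]) simp
  moreover have "(LINT \<xi>:H|lborel. \<bar>vf_apply V u \<xi>\<bar> powr p) = enn2real (\<integral>\<^sup>+\<xi>. ennreal (R \<xi>) \<partial>lborel)"
    unfolding R_def vf_apply_def
    by (rule set_integral_lborel_eq_nn_integral[OF R_meas[unfolded R_def[abs_def]]]) simp
  ultimately show ?thesis
    by (simp add: H_def t_def enn2real_mult)
qed

theorem mainTheorem5:
  fixes \<nu> :: "'n::finite heis" and d p :: real and i :: 'n and u :: "'n heis \<Rightarrow> real"
  assumes "norm \<nu> = 1"
    and "p > 1"
    and "u \<in> C0_inf (halfspace \<nu> d)"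
  shows "((p - 1) / p) powr p *
           (LINT \<xi>:halfspace \<nu> d|lborel.
              \<bar>inner (Xvf i \<xi>) \<nu>\<bar> powr p / infdist \<xi> (frontier (halfspace \<nu> d)) powr p
              * \<bar>u \<xi>\<bar> powr p)
         \<le> (LINT \<xi>:halfspace \<nu> d|lborel. \<bar>vf_apply (Xvf i) u \<xi>\<bar> powr p)
       \<and> ((p - 1) / p) powr p *
           (LINT \<xi>:halfspace \<nu> d|lborel.
              \<bar>inner (Yvf i \<xi>) \<nu>\<bar> powr p / infdist \<xi> (frontier (halfspace \<nu> d)) powr p
              * \<bar>u \<xi>\<bar> powr p)
         \<le> (LINT \<xi>:halfspace \<nu> d|lborel. \<bar>vf_apply (Yvf i) u \<xi>\<bar> powr p)"
proof
  show "((p - 1) / p) powr p *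
           (LINT \<xi>:halfspace \<nu> d|lborel.
              \<bar>inner (Xvf i \<xi>) \<nu>\<bar> powr p / infdist \<xi> (frontier (halfspace \<nu> d)) powr p
              * \<bar>u \<xi>\<bar> powr p)
         \<le> (LINT \<xi>:halfspace \<nu> d|lborel. \<bar>vf_apply (Xvf i) u \<xi>\<bar> powr p)"
    by (rule hardy_halfspace_along_field[OF assms continuous_on_Xvf _ nn_integral_Xvf_lines
          sets_borel_Xvf_slab]) (simp add: Xvf_def)
  show "((p - 1) / p) powr p *
           (LINT \<xi>:halfspace \<nu> d|lborel.
              \<bar>inner (Yvf i \<xi>) \<nu>\<bar> powr p / infdist \<xi> (frontier (halfspace \<nu> d)) powr p
              * \<bar>u \<xi>\<bar> powr p)
         \<le> (LINT \<xi>:halfspace \<nu> d|lborel. \<bar>vf_apply (Yvf i) u \<xi>\<bar> powr p)"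
    by (rule hardy_halfspace_along_field[OF assms continuous_on_Yvf _ nn_integral_Yvf_lines
          sets_borel_Yvf_slab]) (simp add: Yvf_def)
qed

end
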